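(* Let $(\mathsf P,\mathcal O)$ be a semitopology and $p\in\mathsf P$. Then in the semiframe $(\mathcal O,\subseteq,\between)$ we have $\mathcal K(\mathrm{nbhd}(p))=K(p)$.
   Context: A semitopology is a pair $(\mathsf P,\mathcal O)$ where $\mathcal O\subseteq\mathcal P(\mathsf P)$ contains $\varnothing,\mathsf P$ and is closed under arbitrary unions; $(\mathcal O,\subseteq,\between)$ is the semiframe with joins given by unions and $O\between O'$ meaning $O\cap O'\neq\varnothing$. $\mathrm{nbhd}(p)=\{O\in\mathcal O\mid p\in O\}$. Points $p,p'$ are intertwined when every open containing $p$ meets every open containing $p'$; $I(p)$ is the set of points intertwined with $p$; $K(p)=\mathrm{int}(I(p))$, the union of all open subsets of $I(p)$. In a semiframe $(X,\le,\ast)$ (complete join-semilattice with commutative relation $\ast$ satisfying $x\ast x$ for $x\ne\bot$ and $x\ast\bigvee Y\iff\exists y\in Y.\,x\ast y$), for $F\subseteq X$ write $y\ast F$ when $y\ast z$ for all $z\in F$; the abstract community is $\mathcal K(F)=\bigvee\{z\in X\mid\neg(z\ast c_F)\}$ where $c_F=\bigvee\{y\in X\mid\neg(y\ast F)\}$. *)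

theory Defs
  imports Main
begin

definition semitopology :: "'a set \<Rightarrow> 'a set set \<Rightarrow> bool" where
  "semitopology P Opens \<longleftrightarrow>
     Opens \<subseteq> Pow P \<and> {} \<in> Opens \<and> P \<in> Opens \<and>
     (\<forall>S. S \<subseteq> Opens \<longrightarrow> \<Union>S \<in> Opens)"

definition nbhd :: "'a set set \<Rightarrow> 'a \<Rightarrow> 'a set set" where
  "nbhd Opens p = {U \<in> Opens. p \<in> U}"

definition intertwined :: "'a set set \<Rightarrow> 'a \<Rightarrow> 'a \<Rightarrow> bool" where
  "intertwined Opens p p' \<longleftrightarrow>
     (\<forall>U \<in> Opens. \<forall>U' \<in> Opens. p \<in> U \<longrightarrow> p' \<in> U' \<longrightarrow> U \<inter> U' \<noteq> {})"

definition intertwined_set :: "'a set \<Rightarrow> 'a set set \<Rightarrow> 'a \<Rightarrow> 'a set" where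
  "intertwined_set P Opens p = {p' \<in> P. intertwined Opens p p'}"

definition sinterior :: "'a set set \<Rightarrow> 'a set \<Rightarrow> 'a set" where
  "sinterior Opens A = \<Union>{U \<in> Opens. U \<subseteq> A}"

definition community :: "'a set \<Rightarrow> 'a set set \<Rightarrow> 'a \<Rightarrow> 'a set" where
  "community P Opens p = sinterior Opens (intertwined_set P Opens p)"

text \<open>Abstract community in a semiframe given by carrier X, join operation J
(on subsets of X) and compatibility relation R:
  K(F) = J {z \<in> X. \<not> R z c_F}, where c_F = J {y \<in> X. \<not> (y R F)}.\<close>
definition sf_community :: "'x set \<Rightarrow> ('x set \<Rightarrow> 'x) \<Rightarrow> ('x \<Rightarrow> 'x \<Rightarrow> bool) \<Rightarrow> 'x set \<Rightarrow> 'x" where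
  "sf_community X J R F =
     (let c = J {y \<in> X. \<not> (\<forall>z \<in> F. R y z)} in J {z \<in> X. \<not> R z c})"

definition meets :: "'a set \<Rightarrow> 'a set \<Rightarrow> bool" where
  "meets A B \<longleftrightarrow> A \<inter> B \<noteq> {}"

end

theory Submission
  imports Defs
begin

text \<open>In the semiframe of opens, \<open>c\<^sub>F\<close> for \<open>F = nbhd(p)\<close> is the union of all opens that
miss some open neighbourhood of \<open>p\<close>. An open therefore meets \<open>c\<^sub>F\<close> exactly when it contains a
point not intertwined with \<open>p\<close>, so the opens disjoint from \<open>c\<^sub>F\<close> are exactly the open subsets
of \<open>I(p)\<close>, and their unions agree.\<close>

definition sf_complement :: "'x set \<Rightarrow> ('x set \<Rightarrow> 'x) \<Rightarrow> ('x \<Rightarrow> 'x \<Rightarrow> bool) \<Rightarrow> 'x set \<Rightarrow> 'x" where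
  "sf_complement X J R F = J {y \<in> X. \<not> (\<forall>z \<in> F. R y z)}"

lemma sf_community_eq:
  "sf_community X J R F = J {z \<in> X. \<not> R z (sf_complement X J R F)}"
  unfolding sf_community_def sf_complement_def Let_def ..

lemma meets_sf_complement_nbhd_iff:
  "meets U (sf_complement Opens Union meets (nbhd Opens p))
    \<longleftrightarrow> (\<exists>q \<in> U. \<not> intertwined Opens p q)"
proof
  assume "meets U (sf_complement Opens Union meets (nbhd Opens p))"
  then obtain q V W where "q \<in> U" "q \<in> V" "V \<in> Opens" "W \<in> Opens" "p \<in> W" "V \<inter> W = {}"
    unfolding sf_complement_def meets_def nbhd_def by blast
  then show "\<exists>q \<in> U. \<not> intertwined Opens p q"
    unfolding intertwined_def by blast
next
  assume "\<exists>q \<in> U. \<not> intertwined Opens p q"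
  then obtain q W V where "q \<in> U" "W \<in> Opens" "V \<in> Opens" "p \<in> W" "q \<in> V" "W \<inter> V = {}"
    unfolding intertwined_def by blast
  then have "q \<in> sf_complement Opens Union meets (nbhd Opens p)"
    unfolding sf_complement_def nbhd_def meets_def by blast
  with \<open>q \<in> U\<close> show "meets U (sf_complement Opens Union meets (nbhd Opens p))"
    unfolding meets_def by blast
qed

lemma subset_intertwined_set_iff:
  assumes "U \<subseteq> P"
  shows "U \<subseteq> intertwined_set P Opens p \<longleftrightarrow> (\<forall>q \<in> U. intertwined Opens p q)"
  using assms unfolding intertwined_set_def by blast

theorem proposition9p25:
  fixes P :: "'a set" and Opens :: "'a set set" and p :: 'a
  assumes "semitopology P Opens" and "p \<in> P"
  shows "sf_community Opens Union meets (nbhd Opens p) = community P Opens p"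
proof -
  have opens_subset: "U \<subseteq> P" if "U \<in> Opens" for U
    using assms(1) that unfolding semitopology_def by blast
  have "{U \<in> Opens. \<not> meets U (sf_complement Opens Union meets (nbhd Opens p))}
      = {U \<in> Opens. U \<subseteq> intertwined_set P Opens p}"
  proof (intro Collect_cong conj_cong refl)
    fix U assume "U \<in> Opens"
    then show "\<not> meets U (sf_complement Opens Union meets (nbhd Opens p))
        \<longleftrightarrow> U \<subseteq> intertwined_set P Opens p"
      by (simp add: meets_sf_complement_nbhd_iff subset_intertwined_set_iff opens_subset)
  qed
  then show ?thesis
    unfolding sf_community_eq community_def sinterior_def by simp
qed

end
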